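(* Let $F$ and $G$ be experiments on the state space $\Theta=\{\theta_0,\ldots,\theta_n\}$ with densities $f(\cdot\mid\theta)$ on $\mathcal{X}$ and $g(\cdot\mid\theta)$ on $\mathcal{Y}$, and assume $f(x\mid\theta_0)>0$ for all $x\in\mathcal{X}$ and $g(y\mid\theta_0)>0$ for all $y\in\mathcal{Y}$. Then $F\succeq_{\textup{LB}}G$ if and only if $\boldsymbol{\ell}_F\succeq_{\textup{lcx}}\boldsymbol{\ell}_G$.
   Context: States: $\Theta=\{\theta_0,\ldots,\theta_n\}\subset\mathbb{R}$. An experiment $F$ specifies, for each $\theta$, an absolutely continuous distribution $F(\cdot\mid\theta)$ with density $f(\cdot\mid\theta)$ of a signal $X$ in a compact interval $\mathcal{X}$; likewise $G$ with densities $g(\cdot\mid\theta)$ of a signal $Y$ in a compact interval $\mathcal{Y}$. Let $\widehat{\Delta}_n=\{\boldsymbol{q}\in[0,1]^n:\sum_{i=1}^n q_i\le1\}$; a prior $\boldsymbol{q}$ puts probability $q_i$ on $\theta_i$, $i\ge1$, and $q_0=1-\sum_i q_i$ on $\theta_0$. The posterior vector is $\boldsymbol{p}_F(x;\boldsymbol{q})=(p_{F,i}(x;\boldsymbol{q}))_{i=1}^n$ with $p_{F,i}(x;\boldsymbol{q})=q_if(x\mid\theta_i)/\sum_{j=0}^nq_jf(x\mid\theta_j)$, and $\boldsymbol{p}_F(\boldsymbol{q})$ is the random vector $\boldsymbol{p}_F(X;\boldsymbol{q})$ with $X$ distributed according to the unconditional distribution $\sum_j q_jF(\cdot\mid\theta_j)$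 (analogously for $G$). For random vectors with equal means, $\boldsymbol{\mu}\succeq_{\textup{cx}}\boldsymbol{\nu}$ means $\mathbb{E}[C(\boldsymbol{\mu})]\ge\mathbb{E}[C(\boldsymbol{\nu})]$ for all convex $C$, and $\boldsymbol{\mu}\succeq_{\textup{lcx}}\boldsymbol{\nu}$ means $\boldsymbol{b}\cdot\boldsymbol{\mu}\succeq_{\textup{cx}}\boldsymbol{b}\cdot\boldsymbol{\nu}$ for all $\boldsymbol{b}\in\mathbb{R}^n$. $F\succeq_{\textup{LB}}G$ means $\boldsymbol{p}_F(\boldsymbol{q})\succeq_{\textup{lcx}}\boldsymbol{p}_G(\boldsymbol{q})$ for all $\boldsymbol{q}\in\widehat{\Delta}_n$. Likelihood ratios: $l_{F,i}(x)=f(x\mid\theta_i)/f(x\mid\theta_0)$, $\boldsymbol{\ell}_F(x)=(l_{F,1}(x),\ldots,l_{F,n}(x))$, and $\boldsymbol{\ell}_F$ denotes the random vector $\boldsymbol{\ell}_F(X)$ with $X\sim F(\cdot\mid\theta_0)$; analogously $\boldsymbol{\ell}_G=\boldsymbol{\ell}_G(Y)$ with $Y\sim G(\cdot\mid\theta_0)$, $l_{G,i}=g(\cdot\mid\theta_i)/g(\cdot\mid\theta_0)$. *)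

theory Defs
  imports "HOL-Analysis.Analysis"
begin

text \<open>States are indexed by 0..n (state i = theta_i). Vectors in R^n are functions
  nat => real of which only the coordinates 1..n matter.\<close>

definition sig_space :: "real \<Rightarrow> real \<Rightarrow> real measure" where
  "sig_space a b = restrict_space lborel {a..b}"

definition is_experiment :: "nat \<Rightarrow> real \<Rightarrow> real \<Rightarrow> (nat \<Rightarrow> real \<Rightarrow> real) \<Rightarrow> bool" where
  "is_experiment n a b f \<longleftrightarrow> a \<le> b \<and>
     (\<forall>i\<le>n. f i \<in> borel_measurable (sig_space a b) \<and> (\<forall>x\<in>{a..b}. 0 \<le> f i x) \<and>
        (\<integral>\<^sup>+ x. ennreal (f i x) \<partial>sig_space a b) = 1)"

definition priors :: "nat \<Rightarrow> (nat \<Rightarrow> real) set" where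
  "priors n = {q. (\<forall>i\<in>{1..n}. 0 \<le> q i \<and> q i \<le> 1) \<and> (\<Sum>i=1..n. q i) \<le> 1}"

definition full_prior :: "nat \<Rightarrow> (nat \<Rightarrow> real) \<Rightarrow> nat \<Rightarrow> real" where
  "full_prior n q j = (if j = 0 then 1 - (\<Sum>i=1..n. q i) else q j)"

definition uncond :: "nat \<Rightarrow> real \<Rightarrow> real \<Rightarrow> (nat \<Rightarrow> real \<Rightarrow> real) \<Rightarrow> (nat \<Rightarrow> real) \<Rightarrow> real measure" where
  "uncond n a b f q = density (sig_space a b) (\<lambda>x. ennreal (\<Sum>j\<le>n. full_prior n q j * f j x))"

definition posterior :: "nat \<Rightarrow> (nat \<Rightarrow> real \<Rightarrow> real) \<Rightarrow> (nat \<Rightarrow> real) \<Rightarrow> real \<Rightarrow> nat \<Rightarrow> real" where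
  "posterior n f q x i = q i * f i x / (\<Sum>j\<le>n. full_prior n q j * f j x)"

definition lratio :: "(nat \<Rightarrow> real \<Rightarrow> real) \<Rightarrow> real \<Rightarrow> nat \<Rightarrow> real" where
  "lratio f x i = f i x / f 0 x"

definition state0 :: "real \<Rightarrow> real \<Rightarrow> (nat \<Rightarrow> real \<Rightarrow> real) \<Rightarrow> real measure" where
  "state0 a b f = density (sig_space a b) (\<lambda>x. ennreal (f 0 x))"

text \<open>Extended-real expectation E[h] = E[h^+] - E[h^-] (well-defined in (-inf,+inf]
  whenever the negative part is integrable, e.g. for h = C o Z with C convex and Z integrable).\<close>
definition ext_expect :: "'a measure \<Rightarrow> ('a \<Rightarrow> real) \<Rightarrow> ereal" where
  "ext_expect M h = enn2ereal (\<integral>\<^sup>+ x. ennreal (h x) \<partial>M) - enn2ereal (\<integral>\<^sup>+ x. ennreal (- h x) \<partial>M)"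

definition cx_ge :: "'a measure \<Rightarrow> ('a \<Rightarrow> real) \<Rightarrow> 'b measure \<Rightarrow> ('b \<Rightarrow> real) \<Rightarrow> bool" where
  "cx_ge M X N Y \<longleftrightarrow> integrable M X \<and> integrable N Y \<and>
     integral\<^sup>L M X = integral\<^sup>L N Y \<and>
     (\<forall>C::real \<Rightarrow> real. convex_on UNIV C \<longrightarrow> ext_expect M (C \<circ> X) \<ge> ext_expect N (C \<circ> Y))"

definition lcx_ge :: "nat \<Rightarrow> 'a measure \<Rightarrow> ('a \<Rightarrow> nat \<Rightarrow> real) \<Rightarrow> 'b measure \<Rightarrow> ('b \<Rightarrow> nat \<Rightarrow> real) \<Rightarrow> bool" where
  "lcx_ge n M X N Y \<longleftrightarrow>
     (\<forall>c::nat \<Rightarrow> real. cx_ge M (\<lambda>x. \<Sum>i=1..n. c i * X x i) N (\<lambda>y. \<Sum>i=1..n. c i * Y y i))"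

definition LB_ge :: "nat \<Rightarrow> real \<Rightarrow> real \<Rightarrow> (nat \<Rightarrow> real \<Rightarrow> real) \<Rightarrow> real \<Rightarrow> real \<Rightarrow> (nat \<Rightarrow> real \<Rightarrow> real) \<Rightarrow> bool" where
  "LB_ge n a b f c d g \<longleftrightarrow>
     (\<forall>q\<in>priors n. lcx_ge n (uncond n a b f q) (posterior n f q) (uncond n c d g q) (posterior n g q))"

end

theory Submission
  imports Defs "HOL-Probability.Probability_Measure"
begin

text \<open>For real random variables with equal means, the convex order coincides with the
  stop-loss order \<open>E (Y - t)\<^sup>+ \<le> E (X - t)\<^sup>+\<close>: hinges are convex, and conversely every
  convex function is the pointwise limit of maxima of finitely many supporting lines, each of
  which is an affine function plus a nonnegative combination of hinges, so Fatou's lemma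
  transfers the inequality.

  Under the unconditional law with prior \<open>q\<close>, the stop-loss transform of \<open>\<beta> \<bullet> p\<^sub>F(q)\<close> at \<open>t\<close>
  is \<open>\<integral> (\<Sum>\<^sub>i w\<^sub>i f(x|\<theta>\<^sub>i) + w\<^sub>0 f(x|\<theta>\<^sub>0))\<^sup>+ dx\<close> with \<open>w\<^sub>i = (\<beta>\<^sub>i - t) q\<^sub>i\<close> and
  \<open>w\<^sub>0 = -t q\<^sub>0\<close>; under \<open>F(\<cdot>|\<theta>\<^sub>0)\<close>, that of \<open>\<beta> \<bullet> \<ell>\<^sub>F\<close> is the same integral with
  \<open>w = \<beta>\<close> and \<open>w\<^sub>0 = -t\<close>. Already the uniform prior makes the first family of coefficients
  exhaust all \<open>(w, w\<^sub>0)\<close>, so both orders say that this integral is larger for \<open>F\<close> than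
  for \<open>G\<close>, for every \<open>(w, w\<^sub>0)\<close>.\<close>

definition left_deriv :: "(real \<Rightarrow> real) \<Rightarrow> real \<Rightarrow> real" where
  "left_deriv C t = (SUP h\<in>{0<..}. (C t - C (t - h)) / h)"

definition support_line :: "(real \<Rightarrow> real) \<Rightarrow> real \<Rightarrow> real \<Rightarrow> real" where
  "support_line C t z = C t + left_deriv C t * (z - t)"

lemma convex_on_slope_mono:
  fixes C :: "real \<Rightarrow> real"
  assumes "convex_on UNIV C" "x < y" "y < z"
  shows "(C y - C x) / (y - x) \<le> (C z - C y) / (z - y)"
proof -
  have "(C x - C y) / (x - y) \<le> (C y - C z) / (y - z)"
    using convex_on_slope_le[OF assms(1) _ _ assms(2,3)] by fastforce
  then show ?thesis
    by (metis minus_diff_eq minus_divide_divide)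
qed

lemma slope_le_left_deriv:
  fixes C :: "real \<Rightarrow> real"
  assumes "convex_on UNIV C" "h > 0"
  shows "(C t - C (t - h)) / h \<le> left_deriv C t"
  unfolding left_deriv_def
proof (rule cSup_upper)
  show "bdd_above ((\<lambda>h. (C t - C (t - h)) / h) ` {0<..})"
    using convex_on_slope_mono[OF assms(1), of "t - _" t "t + 1"]
    by (intro bdd_aboveI2[where M = "C (t + 1) - C t"]) auto
qed (use assms in auto)

lemma left_deriv_le_slope:
  fixes C :: "real \<Rightarrow> real"
  assumes "convex_on UNIV C" "k > 0"
  shows "left_deriv C t \<le> (C (t + k) - C t) / k"
  unfolding left_deriv_def
  using convex_on_slope_mono[OF assms(1), of "t - _" t "t + k"] assms(2)
  by (intro cSup_least) auto

lemma support_line_le: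
  fixes C :: "real \<Rightarrow> real"
  assumes "convex_on UNIV C"
  shows "support_line C t z \<le> C z"
proof (cases z t rule: linorder_cases)
  case less
  then have "(C t - C z) / (t - z) \<le> left_deriv C t"
    using slope_le_left_deriv[OF assms, of "t - z" t] by simp
  with less show ?thesis
    unfolding support_line_def by (simp add: divide_le_eq algebra_simps)
next
  case greater
  then have "left_deriv C t \<le> (C z - C t) / (z - t)"
    using left_deriv_le_slope[OF assms, of "z - t" t] by simp
  with greater show ?thesis
    unfolding support_line_def by (simp add: le_divide_eq algebra_simps)
qed (simp add: support_line_def)

lemma left_deriv_mono:
  fixes C :: "real \<Rightarrow> real"
  assumes "convex_on UNIV C" "s \<le> s'"
  shows "left_deriv C s \<le> left_deriv C s'"
  using left_deriv_le_slope[OF assms(1), of "s' - s" s] slope_le_left_deriv[OF assms(1), of "s' - s" s']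
    assms(2) by (cases "s = s'") auto

lemma support_line_le_right:
  fixes C :: "real \<Rightarrow> real"
  assumes "convex_on UNIV C" "s \<le> s'" "s' \<le> z"
  shows "support_line C s z \<le> support_line C s' z"
proof -
  have "support_line C s' z - support_line C s z
      = (C s' - support_line C s s') + (left_deriv C s' - left_deriv C s) * (z - s')"
    unfolding support_line_def by (simp add: algebra_simps)
  moreover have "0 \<le> (left_deriv C s' - left_deriv C s) * (z - s')"
    using left_deriv_mono[OF assms(1,2)] assms(3) by simp
  ultimately show ?thesis
    using support_line_le[OF assms(1), of s s'] by linarith
qed

lemma support_line_le_left:
  fixes C :: "real \<Rightarrow> real"
  assumes "convex_on UNIV C" "s \<le> s'" "z \<le> s"
  shows "support_line C s' z \<le> support_line C s z"
proof -
  have "support_line C s z - support_line C s' z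
      = (C s - support_line C s' s) + (left_deriv C s' - left_deriv C s) * (s - z)"
    unfolding support_line_def by (simp add: algebra_simps)
  moreover have "0 \<le> (left_deriv C s' - left_deriv C s) * (s - z)"
    using left_deriv_mono[OF assms(1,2)] assms(3) by simp
  ultimately show ?thesis
    using support_line_le[OF assms(1), of s' s] by linarith
qed

fun support_hinges :: "(real \<Rightarrow> real) \<Rightarrow> real list \<Rightarrow> real \<Rightarrow> real" where
  "support_hinges C (t # t' # ts) z =
     max 0 (support_line C t' z - support_line C t z) + support_hinges C (t' # ts) z"
| "support_hinges C _ z = 0"

text \<open>For sorted \<open>ts\<close> this is the maximum of the supporting lines at the points of \<open>ts\<close>,
  written as an affine function plus a sum of hinges \<open>max 0 (\<alpha> * z + \<beta>)\<close>.\<close>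
definition support_env :: "(real \<Rightarrow> real) \<Rightarrow> real list \<Rightarrow> real \<Rightarrow> real" where
  "support_env C ts z = support_line C (hd ts) z + support_hinges C ts z"

lemma support_hinges_nonneg: "support_hinges C ts z \<ge> 0"
  by (induction C ts z rule: support_hinges.induct) auto

lemma support_hinges_eq_0:
  assumes "convex_on UNIV C" "sorted (t # ts)" "z \<le> t"
  shows "support_hinges C (t # ts) z = 0"
  using assms(2,3)
proof (induction ts arbitrary: t)
  case (Cons t' ts)
  then show ?case
    using support_line_le_left[OF assms(1), of t t' z] by auto
qed simp

lemma support_env_le:
  fixes C :: "real \<Rightarrow> real"
  assumes cvx: "convex_on UNIV C" and "sorted ts"
  shows "support_env C ts z \<le> C z"
proof -
  have "support_line C t z + support_hinges C (t # ts) z \<le> C z" if "sorted (t # ts)" for t ts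
    using that
  proof (induction ts arbitrary: t)
    case Nil
    then show ?case using support_line_le[OF cvx] by simp
  next
    case (Cons t' ts)
    show ?case
    proof (cases "t' \<le> z")
      case True
      then have "support_line C t z \<le> support_line C t' z"
        using support_line_le_right[OF cvx, of t t' z] Cons.prems by simp
      then show ?thesis using Cons by simp
    next
      case False
      then have "support_hinges C (t' # ts) z = 0"
        using support_hinges_eq_0[OF cvx, of t' ts z] Cons.prems by simp
      then show ?thesis using support_line_le[OF cvx, of t z] support_line_le[OF cvx, of t' z] by simp
    qed
  qed
  then show ?thesis
    using assms(2) support_line_le[OF cvx] by (cases ts) (auto simp: support_env_def)
qed

lemma support_line_le_support_env:
  assumes "s \<in> set ts"
  shows "support_line C s z \<le> support_env C ts z"
proof -
  have "support_line C s z \<le> support_line C t z + support_hinges C (t # ts) z"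
    if "s \<in> set (t # ts)" for t ts
    using that
  proof (induction ts arbitrary: t)
    case (Cons t' ts)
    show ?case
    proof (cases "s = t")
      case True
      then show ?thesis using support_hinges_nonneg[of C "t # t' # ts" z] by simp
    next
      case False
      then show ?thesis using Cons.IH[of t'] Cons.prems by simp
    qed
  qed simp
  then show ?thesis
    using assms by (cases ts) (auto simp: support_env_def)
qed

definition grid :: "nat \<Rightarrow> real list" where
  "grid k = map (\<lambda>j. real_of_int j / real (Suc k)) [- (int (Suc k))\<^sup>2 .. (int (Suc k))\<^sup>2]"

lemma sorted_grid: "sorted (grid k)"
  unfolding grid_def sorted_map
  by (rule sorted_wrt_mono_rel[OF _ sorted_upto]) (auto intro: divide_right_mono)

lemma zero_in_grid: "0 \<in> set (grid k)"
  unfolding grid_def by (auto intro!: image_eqI[where x = 0])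

lemma floor_in_grid:
  assumes "\<bar>z\<bar> \<le> real k"
  shows "real_of_int \<lfloor>z * real (Suc k)\<rfloor> / real (Suc k) \<in> set (grid k)"
proof -
  have "\<bar>z * real (Suc k)\<bar> \<le> real k * real (Suc k)"
    using assms by (simp add: abs_mult mult_right_mono)
  then have "\<bar>real_of_int \<lfloor>z * real (Suc k)\<rfloor>\<bar> \<le> (real (Suc k))\<^sup>2"
    by (simp add: power2_eq_square algebra_simps) linarith
  then have "\<bar>\<lfloor>z * real (Suc k)\<rfloor>\<bar> \<le> (int (Suc k))\<^sup>2"
    by (metis of_int_abs of_int_le_iff of_int_of_nat_eq of_int_power)
  then show ?thesis
    unfolding grid_def set_map set_upto by (intro imageI) (simp add: abs_le_iff)
qed

lemma support_env_grid_tendsto: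
  fixes C :: "real \<Rightarrow> real"
  assumes cvx: "convex_on UNIV C"
  shows "(\<lambda>k. support_env C (grid k) z) \<longlonglongrightarrow> C z"
proof -
  define t where "t k = real_of_int \<lfloor>z * real (Suc k)\<rfloor> / real (Suc k)" for k
  have t_le: "t k \<le> z" for k
  proof -
    have "real_of_int \<lfloor>z * real (Suc k)\<rfloor> \<le> z * real (Suc k)"
      by simp
    then show ?thesis
      unfolding t_def by (simp add: divide_le_eq)
  qed
  have t_ge: "z - 1 / real (Suc k) \<le> t k" for k
  proof -
    have "z * real (Suc k) - 1 \<le> real_of_int \<lfloor>z * real (Suc k)\<rfloor>"
      by linarith
    then have "(z * real (Suc k) - 1) / real (Suc k) \<le> t k"
      unfolding t_def by (intro divide_right_mono) auto
    then show ?thesis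
      by (simp add: diff_divide_distrib)
  qed
  have mesh: "(\<lambda>k. 1 / real (Suc k)) \<longlonglongrightarrow> 0"
    using LIMSEQ_inverse_real_of_nat by (simp add: inverse_eq_divide)
  have t_lim: "t \<longlonglongrightarrow> z"
  proof (rule tendsto_sandwich[of "\<lambda>k. z - 1 / real (Suc k)" t sequentially "\<lambda>k. z"])
    show "\<forall>\<^sub>F k in sequentially. z - 1 / real (Suc k) \<le> t k"
      using t_ge by (intro always_eventually) blast
    show "\<forall>\<^sub>F k in sequentially. t k \<le> z"
      using t_le by (intro always_eventually) blast
    show "(\<lambda>k. z - 1 / real (Suc k)) \<longlonglongrightarrow> z"
      using tendsto_diff[OF tendsto_const mesh, of z] by simp
  qed (rule tendsto_const)
  have "continuous_on UNIV C"
    by (rule convex_on_continuous[OF open_UNIV cvx])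
  then have "(\<lambda>k. C (t k)) \<longlonglongrightarrow> C z"
    by (rule continuous_on_tendsto_compose[OF _ t_lim]) auto
  define B where "B = \<bar>left_deriv C (z - 1)\<bar> + \<bar>left_deriv C z\<bar>"
  have lower_lim: "(\<lambda>k. C (t k) - B * (1 / real (Suc k))) \<longlonglongrightarrow> C z"
    using tendsto_diff[OF \<open>(\<lambda>k. C (t k)) \<longlonglongrightarrow> C z\<close> tendsto_mult_right_zero[OF mesh, of B]]
    by simp
  have "\<forall>\<^sub>F k in sequentially. t k \<in> set (grid k)"
    using eventually_ge_at_top[of "nat \<lceil>\<bar>z\<bar>\<rceil>"]
  proof eventually_elim
    case (elim k)
    then have "\<bar>z\<bar> \<le> real k"
      by linarith
    then show ?case
      unfolding t_def by (rule floor_in_grid)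
  qed
  then have lower: "\<forall>\<^sub>F k in sequentially. C (t k) - B * (1 / real (Suc k)) \<le> support_env C (grid k) z"
  proof eventually_elim
    case (elim k)
    have "1 / real (Suc k) \<le> 1"
      by simp
    then have "z - 1 \<le> t k"
      using t_ge[of k] by linarith
    then have "left_deriv C (z - 1) \<le> left_deriv C (t k)" "left_deriv C (t k) \<le> left_deriv C z"
      using left_deriv_mono[OF cvx] t_le[of k] by simp_all
    then have "\<bar>left_deriv C (t k)\<bar> \<le> B"
      unfolding B_def by linarith
    moreover have "0 \<le> z - t k" "z - t k \<le> 1 / real (Suc k)"
      using t_le[of k] t_ge[of k] by linarith+
    ultimately have "\<bar>left_deriv C (t k) * (z - t k)\<bar> \<le> B * (1 / real (Suc k))"
      unfolding abs_mult by (intro mult_mono) simp_all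
    then have "C (t k) - B * (1 / real (Suc k)) \<le> support_line C (t k) z"
      unfolding support_line_def by linarith
    also have "\<dots> \<le> support_env C (grid k) z"
      by (rule support_line_le_support_env[OF elim])
    finally show ?case .
  qed
  show ?thesis
    by (rule tendsto_sandwich[OF lower _ lower_lim tendsto_const])
       (simp add: support_env_le[OF cvx sorted_grid])
qed

lemma support_line_affine:
  "support_line C t = (\<lambda>z. left_deriv C t * z + (C t - left_deriv C t * t))"
  by (auto simp: fun_eq_iff support_line_def algebra_simps)

lemma enn2ereal_diff_rearrange:
  fixes P Q U Gp Gm :: ennreal
  assumes eq: "P + Gm = U + Gp + Q" and fin: "Q \<noteq> top" "Gm \<noteq> top" "Gp \<noteq> top"
  shows "enn2ereal P - enn2ereal Q = enn2ereal U + ereal (enn2real Gp - enn2real Gm)"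
proof (cases "U = top")
  case True
  then have "P = top" using eq fin by (auto simp: top_add)
  then show ?thesis using True fin
    by (cases Q rule: ennreal_cases) auto
next
  case False
  have "P \<noteq> top"
  proof
    assume "P = top"
    then have "U + Gp + Q = top" using eq by (simp add: top_add)
    then show False using False fin by (simp add: ennreal_add_eq_top)
  qed
  then show ?thesis using False fin eq
    by (cases P rule: ennreal_cases; cases Q rule: ennreal_cases; cases U rule: ennreal_cases;
        cases Gp rule: ennreal_cases; cases Gm rule: ennreal_cases)
       (auto simp flip: ennreal_plus simp: ennreal_inj)
qed

lemma ext_expect_eq_nn_integral_diff_plus_integral:
  fixes h g :: "'a \<Rightarrow> real"
  assumes hm: "h \<in> borel_measurable M" and gi: "integrable M g"
    and le: "\<And>x. x \<in> space M \<Longrightarrow> g x \<le> h x"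
  shows "ext_expect M h = enn2ereal (\<integral>\<^sup>+x. ennreal (h x - g x) \<partial>M) + ereal (\<integral>x. g x \<partial>M)"
proof -
  have gm: "g \<in> borel_measurable M"
    using gi by auto
  have "ennreal (h x) + ennreal (- g x) = ennreal (h x - g x) + ennreal (g x) + ennreal (- h x)"
    if "x \<in> space M" for x
    using le[OF that]
    by (cases "0 \<le> h x"; cases "0 \<le> g x")
       (simp_all add: ennreal_neg flip: ennreal_plus)
  then have "(\<integral>\<^sup>+x. ennreal (h x) + ennreal (- g x) \<partial>M) =
        (\<integral>\<^sup>+x. ennreal (h x - g x) + ennreal (g x) + ennreal (- h x) \<partial>M)"
    by (rule nn_integral_cong)
  then have eq: "(\<integral>\<^sup>+x. ennreal (h x) \<partial>M) + (\<integral>\<^sup>+x. ennreal (- g x) \<partial>M) =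
     (\<integral>\<^sup>+x. ennreal (h x - g x) \<partial>M) + (\<integral>\<^sup>+x. ennreal (g x) \<partial>M) + (\<integral>\<^sup>+x. ennreal (- h x) \<partial>M)"
    using hm gm by (simp add: nn_integral_add)
  have fin: "(\<integral>\<^sup>+x. ennreal (- g x) \<partial>M) \<noteq> top" "(\<integral>\<^sup>+x. ennreal (g x) \<partial>M) \<noteq> top"
    using gi by auto
  have "(\<integral>\<^sup>+x. ennreal (- h x) \<partial>M) \<le> (\<integral>\<^sup>+x. ennreal (- g x) \<partial>M)"
    by (rule nn_integral_mono) (use le in \<open>auto intro!: ennreal_leI\<close>)
  then have "(\<integral>\<^sup>+x. ennreal (- h x) \<partial>M) \<noteq> top"
    using fin by (auto simp: top_unique)
  then show ?thesis
    unfolding ext_expect_def real_lebesgue_integral_def[OF gi]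
    by (rule enn2ereal_diff_rearrange[OF eq _ fin])
qed

lemma ext_expect_hinge:
  "ext_expect M ((\<lambda>z. max 0 (z - t)) \<circ> X) = enn2ereal (\<integral>\<^sup>+x. ennreal (X x - t) \<partial>M)"
proof -
  have "(\<integral>\<^sup>+x. ennreal (((\<lambda>z. max 0 (z - t)) \<circ> X) x) \<partial>M) = (\<integral>\<^sup>+x. ennreal (X x - t) \<partial>M)"
    by (intro nn_integral_cong) (simp add: max_def ennreal_neg)
  moreover have "(\<integral>\<^sup>+x. ennreal (- ((\<lambda>z. max 0 (z - t)) \<circ> X) x) \<partial>M) = 0"
    by (simp add: ennreal_neg)
  ultimately show ?thesis
    unfolding ext_expect_def by (simp add: zero_ennreal.rep_eq)
qed

lemma (in finite_measure) nn_integral_pos_part_eq_integral: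
  fixes X :: "'a \<Rightarrow> real"
  assumes "integrable M X"
  shows "(\<integral>\<^sup>+x. ennreal (X x - t) \<partial>M) = ennreal (\<integral>x. max 0 (X x - t) \<partial>M)"
proof -
  have "(\<integral>\<^sup>+x. ennreal (X x - t) \<partial>M) = (\<integral>\<^sup>+x. ennreal (max 0 (X x - t)) \<partial>M)"
    by (intro nn_integral_cong) (simp add: max_def ennreal_neg)
  also have "\<dots> = ennreal (\<integral>x. max 0 (X x - t) \<partial>M)"
    using assms by (intro nn_integral_eq_integral) auto
  finally show ?thesis .
qed

locale stop_loss_dominated = M: prob_space M + N: prob_space N
  for M :: "'a measure" and N :: "'b measure" +
  fixes X :: "'a \<Rightarrow> real" and Y :: "'b \<Rightarrow> real"
  assumes integrable_X: "integrable M X" and integrable_Y: "integrable N Y"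
    and mean_eq: "(\<integral>x. X x \<partial>M) = (\<integral>y. Y y \<partial>N)"
    and stop_loss_le: "\<And>t. (\<integral>\<^sup>+y. ennreal (Y y - t) \<partial>N) \<le> (\<integral>\<^sup>+x. ennreal (X x - t) \<partial>M)"
begin

definition expectation_le :: "(real \<Rightarrow> real) \<Rightarrow> bool" where
  "expectation_le h \<longleftrightarrow> integrable M (\<lambda>x. h (X x)) \<and> integrable N (\<lambda>y. h (Y y)) \<and>
     (\<integral>y. h (Y y) \<partial>N) \<le> (\<integral>x. h (X x) \<partial>M)"

lemma integral_affine_eq: "(\<integral>x. \<alpha> * X x + \<beta> \<partial>M) = (\<integral>y. \<alpha> * Y y + \<beta> \<partial>N)"
  using integrable_X integrable_Y mean_eq by (simp add: M.prob_space N.prob_space)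

lemma expectation_le_affine: "expectation_le (\<lambda>z. \<alpha> * z + \<beta>)"
  unfolding expectation_le_def using integrable_X integrable_Y integral_affine_eq by auto

lemma expectation_le_add:
  "expectation_le h1 \<Longrightarrow> expectation_le h2 \<Longrightarrow> expectation_le (\<lambda>z. h1 z + h2 z)"
  unfolding expectation_le_def by auto

lemma expectation_le_cmult: "c \<ge> 0 \<Longrightarrow> expectation_le h \<Longrightarrow> expectation_le (\<lambda>z. c * h z)"
  unfolding expectation_le_def by (auto intro: mult_left_mono)

lemma expectation_le_hinge: "expectation_le (\<lambda>z. max 0 (z - t))"
proof -
  have "ennreal (\<integral>y. max 0 (Y y - t) \<partial>N) \<le> ennreal (\<integral>x. max 0 (X x - t) \<partial>M)"
    using stop_loss_le[of t]
    by (simp add: M.nn_integral_pos_part_eq_integral[OF integrable_X]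
        N.nn_integral_pos_part_eq_integral[OF integrable_Y])
  moreover have "0 \<le> (\<integral>x. max 0 (X x - t) \<partial>M)"
    by (rule integral_nonneg_AE) auto
  ultimately show ?thesis
    unfolding expectation_le_def using integrable_X integrable_Y by (simp add: ennreal_le_iff)
qed

lemma expectation_le_max0_affine: "expectation_le (\<lambda>z. max 0 (\<alpha> * z + \<beta>))"
proof -
  have pos: "expectation_le (\<lambda>z. max 0 (a * z + b))" if "a > 0" for a b
  proof -
    have "(\<lambda>z. max 0 (a * z + b)) = (\<lambda>z. a * max 0 (z - (- b / a)))"
      using that by (auto simp: fun_eq_iff max_def field_simps)
    then show ?thesis
      using expectation_le_cmult[OF _ expectation_le_hinge, of a "- b / a"] that by simp
  qed
  consider "\<alpha> > 0" | "\<alpha> = 0" | "\<alpha> < 0"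
    by linarith
  then show ?thesis
  proof cases
    case 2
    then show ?thesis using expectation_le_affine[of 0 "max 0 \<beta>"] by simp
  next
    case 3
    have "(\<lambda>z. max 0 (\<alpha> * z + \<beta>)) = (\<lambda>z. (\<alpha> * z + \<beta>) + max 0 ((- \<alpha>) * z + (- \<beta>)))"
      by (auto simp: fun_eq_iff max_def)
    then show ?thesis
      using expectation_le_add[OF expectation_le_affine[of \<alpha> \<beta>] pos[of "- \<alpha>" "- \<beta>"]] 3
      by simp
  qed (rule pos)
qed

lemma expectation_le_support_env: "expectation_le (support_env C ts)"
proof -
  have "expectation_le (support_hinges C ts)"
  proof (induction ts rule: induct_list012)
    case (3 t t' ts)
    let ?\<alpha> = "left_deriv C t' - left_deriv C t"
    let ?\<beta> = "(C t' - left_deriv C t' * t') - (C t - left_deriv C t * t)"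
    have "(\<lambda>z. max 0 (support_line C t' z - support_line C t z)) = (\<lambda>z. max 0 (?\<alpha> * z + ?\<beta>))"
      unfolding support_line_affine by (simp add: algebra_simps)
    then have "expectation_le (\<lambda>z. max 0 (support_line C t' z - support_line C t z))"
      using expectation_le_max0_affine by simp
    then show ?case
      using expectation_le_add[OF _ "3.IH"(2)] by simp
  qed (use expectation_le_affine[of 0 0] in simp_all)
  then show ?thesis
    unfolding support_env_def support_line_affine
    using expectation_le_add[OF expectation_le_affine] by simp
qed


lemma nn_integral_support_env_le:
  fixes C :: "real \<Rightarrow> real"
  assumes cvx: "convex_on UNIV C" and ts: "sorted ts" "s \<in> set ts"
  defines "L \<equiv> support_line C s"
  shows "(\<integral>\<^sup>+y. ennreal (support_env C ts (Y y) - L (Y y)) \<partial>N)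
       \<le> (\<integral>\<^sup>+x. ennreal (C (X x) - L (X x)) \<partial>M)"
proof -
  let ?\<psi> = "support_env C ts"
  have L_le: "L z \<le> ?\<psi> z" for z
    unfolding L_def by (rule support_line_le_support_env[OF ts(2)])
  have \<psi>: "expectation_le ?\<psi>"
    by (rule expectation_le_support_env)
  have L: "expectation_le L" "(\<integral>x. L (X x) \<partial>M) = (\<integral>y. L (Y y) \<partial>N)"
    unfolding L_def support_line_affine by (rule expectation_le_affine, rule integral_affine_eq)
  have "(\<integral>\<^sup>+y. ennreal (?\<psi> (Y y) - L (Y y)) \<partial>N) = ennreal (\<integral>y. ?\<psi> (Y y) - L (Y y) \<partial>N)"
    using \<psi> L(1) L_le unfolding expectation_le_def by (intro nn_integral_eq_integral) auto
  also have "\<dots> \<le> ennreal (\<integral>x. ?\<psi> (X x) - L (X x) \<partial>M)"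
    using \<psi> L unfolding expectation_le_def by (intro ennreal_leI) simp
  also have "\<dots> = (\<integral>\<^sup>+x. ennreal (?\<psi> (X x) - L (X x)) \<partial>M)"
    using \<psi> L(1) L_le unfolding expectation_le_def by (intro nn_integral_eq_integral[symmetric]) auto
  also have "\<dots> \<le> (\<integral>\<^sup>+x. ennreal (C (X x) - L (X x)) \<partial>M)"
    using support_env_le[OF cvx ts(1)] by (intro nn_integral_mono ennreal_leI) simp
  finally show ?thesis .
qed

lemma ext_expect_convex_le:
  fixes C :: "real \<Rightarrow> real"
  assumes cvx: "convex_on UNIV C"
  shows "ext_expect N (C \<circ> Y) \<le> ext_expect M (C \<circ> X)"
proof -
  define L where "L = support_line C 0"
  have L: "expectation_le L" "(\<integral>x. L (X x) \<partial>M) = (\<integral>y. L (Y y) \<partial>N)"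
    unfolding L_def support_line_affine by (rule expectation_le_affine, rule integral_affine_eq)
  have L_le: "L z \<le> C z" for z
    unfolding L_def by (rule support_line_le[OF cvx])
  have [measurable]: "C \<in> borel_measurable borel"
    by (intro borel_measurable_continuous_onI convex_on_continuous[OF open_UNIV cvx])
  have [measurable]: "X \<in> borel_measurable M" "Y \<in> borel_measurable N"
    using integrable_X integrable_Y by auto
  have [measurable]: "support_hinges C ts \<in> borel_measurable borel" for ts
    by (induction ts rule: induct_list012) (simp_all add: support_line_affine)
  have "(\<integral>\<^sup>+y. ennreal (C (Y y) - L (Y y)) \<partial>N)
      = (\<integral>\<^sup>+y. liminf (\<lambda>k. ennreal (support_env C (grid k) (Y y) - L (Y y))) \<partial>N)"
    by (intro nn_integral_cong lim_imp_Liminf[symmetric])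
       (auto intro!: tendsto_intros support_env_grid_tendsto[OF cvx])
  also have "\<dots> \<le> liminf (\<lambda>k. \<integral>\<^sup>+y. ennreal (support_env C (grid k) (Y y) - L (Y y)) \<partial>N)"
    by (rule nn_integral_liminf) (simp add: L_def support_env_def support_line_affine)
  also have "\<dots> \<le> (\<integral>\<^sup>+x. ennreal (C (X x) - L (X x)) \<partial>M)"
    using nn_integral_support_env_le[OF cvx sorted_grid zero_in_grid]
    by (intro Liminf_le always_eventually) (simp_all add: L_def)
  finally have "enn2ereal (\<integral>\<^sup>+y. ennreal (C (Y y) - L (Y y)) \<partial>N)
             \<le> enn2ereal (\<integral>\<^sup>+x. ennreal (C (X x) - L (X x)) \<partial>M)"
    by (simp add: less_eq_ennreal.rep_eq)
  moreover have "integrable M (\<lambda>x. L (X x))" "integrable N (\<lambda>y. L (Y y))"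
    using L(1) unfolding expectation_le_def by auto
  ultimately show ?thesis
    unfolding comp_def
    by (simp add: ext_expect_eq_nn_integral_diff_plus_integral L_le L(2) add_right_mono)
qed

end

lemma convex_on_hinge: "convex_on UNIV (\<lambda>z::real. max 0 (z - t))"
proof -
  have "(\<lambda>z::real. max 0 (z - t)) = (\<lambda>z. (dist t z + (z - t)) / 2)"
    by (auto simp: fun_eq_iff dist_real_def max_def)
  moreover have "convex_on UNIV (\<lambda>z::real. (dist t z + (z - t)) / 2)"
    by (intro convex_on_cdiv convex_on_add convex_on_dist convex_on_diff)
       (auto simp: convex_on_ident concave_on_const)
  ultimately show ?thesis
    by simp
qed

theorem cx_ge_iff_stop_loss_le:
  fixes X :: "'a \<Rightarrow> real" and Y :: "'b \<Rightarrow> real"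
  assumes "prob_space M" "prob_space N" "integrable M X" "integrable N Y"
    "(\<integral>x. X x \<partial>M) = (\<integral>y. Y y \<partial>N)"
  shows "cx_ge M X N Y \<longleftrightarrow> (\<forall>t. (\<integral>\<^sup>+y. ennreal (Y y - t) \<partial>N) \<le> (\<integral>\<^sup>+x. ennreal (X x - t) \<partial>M))"
proof
  assume "cx_ge M X N Y"
  then have "ext_expect N ((\<lambda>z. max 0 (z - t)) \<circ> Y) \<le> ext_expect M ((\<lambda>z. max 0 (z - t)) \<circ> X)"
    for t
    using convex_on_hinge unfolding cx_ge_def by blast
  then show "\<forall>t. (\<integral>\<^sup>+y. ennreal (Y y - t) \<partial>N) \<le> (\<integral>\<^sup>+x. ennreal (X x - t) \<partial>M)"
    unfolding ext_expect_hinge by (simp add: less_eq_ennreal.rep_eq)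
next
  assume "\<forall>t. (\<integral>\<^sup>+y. ennreal (Y y - t) \<partial>N) \<le> (\<integral>\<^sup>+x. ennreal (X x - t) \<partial>M)"
  with assms have "stop_loss_dominated M N X Y"
    unfolding stop_loss_dominated_def stop_loss_dominated_axioms_def by blast
  then show "cx_ge M X N Y"
    unfolding cx_ge_def using assms(3-5) stop_loss_dominated.ext_expect_convex_le by blast
qed

lemma prob_space_density_of_nn_integral:
  assumes "u \<in> borel_measurable S" "(\<integral>\<^sup>+x. ennreal (u x) \<partial>S) = 1"
  shows "prob_space (density S (\<lambda>x. ennreal (u x)))"
proof
  show "emeasure (density S (\<lambda>x. ennreal (u x))) (space (density S (\<lambda>x. ennreal (u x)))) = 1"
    using assms by (simp add: emeasure_density)
qed

context
  fixes S :: "'a measure" and u h k :: "'a \<Rightarrow> real"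
  assumes u_meas: "u \<in> borel_measurable S" and u_nonneg: "\<And>x. x \<in> space S \<Longrightarrow> 0 \<le> u x"
    and h_meas: "h \<in> borel_measurable S"
    and u_times_h: "\<And>x. x \<in> space S \<Longrightarrow> u x * h x = k x"
begin

lemma integrable_density_of_times:
  assumes "integrable S k"
  shows "integrable (density S (\<lambda>x. ennreal (u x))) h"
proof -
  have "integrable S (\<lambda>x. u x *\<^sub>R h x) \<longleftrightarrow> integrable S k"
    using u_times_h by (intro Bochner_Integration.integrable_cong) auto
  then have "integrable S (\<lambda>x. u x *\<^sub>R h x)"
    using assms by simp
  then show ?thesis
    using u_meas u_nonneg h_meas by (simp add: integrable_density AE_I2)
qed

lemma integral_density_of_times:
  "(\<integral>x. h x \<partial>density S (\<lambda>x. ennreal (u x))) = (\<integral>x. k x \<partial>S)"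
proof -
  have "(\<integral>x. h x \<partial>density S (\<lambda>x. ennreal (u x))) = (\<integral>x. u x *\<^sub>R h x \<partial>S)"
    using u_meas u_nonneg h_meas by (intro integral_density) (auto intro: AE_I2)
  also have "\<dots> = (\<integral>x. k x \<partial>S)"
    using u_times_h by (intro Bochner_Integration.integral_cong) auto
  finally show ?thesis .
qed

lemma nn_integral_density_of_times_pos_part:
  "(\<integral>\<^sup>+x. ennreal (h x - t) \<partial>density S (\<lambda>x. ennreal (u x)))
     = (\<integral>\<^sup>+x. ennreal (k x - t * u x) \<partial>S)"
proof -
  have "(\<integral>\<^sup>+x. ennreal (h x - t) \<partial>density S (\<lambda>x. ennreal (u x)))
      = (\<integral>\<^sup>+x. ennreal (u x) * ennreal (h x - t) \<partial>S)"
    using u_meas h_meas by (intro nn_integral_density) auto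
  also have "\<dots> = (\<integral>\<^sup>+x. ennreal (k x - t * u x) \<partial>S)"
  proof (intro nn_integral_cong)
    fix x assume x: "x \<in> space S"
    have "ennreal (u x) * ennreal (h x - t) = ennreal (u x * (h x - t))"
      using u_nonneg[OF x] by (subst ennreal_mult') auto
    also have "u x * (h x - t) = k x - t * u x"
      using u_times_h[OF x] by (simp add: algebra_simps)
    finally show "ennreal (u x) * ennreal (h x - t) = ennreal (k x - t * u x)" .
  qed
  finally show ?thesis .
qed

end

definition pos_mass ::
    "nat \<Rightarrow> real \<Rightarrow> real \<Rightarrow> (nat \<Rightarrow> real \<Rightarrow> real) \<Rightarrow> (nat \<Rightarrow> real) \<Rightarrow> real \<Rightarrow> ennreal"
  where "pos_mass n a b f w w0 = (\<integral>\<^sup>+x. ennreal ((\<Sum>i=1..n. w i * f i x) + w0 * f 0 x) \<partial>sig_space a b)"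

lemma space_sig_space [simp]: "space (sig_space a b) = {a..b}"
  by (simp add: sig_space_def)

lemma sum_atMost_split_0: "(\<Sum>j\<le>(n::nat). h j) = h 0 + (\<Sum>j=1..n. h j :: 'a :: comm_monoid_add)"
proof -
  have "{..n} = insert 0 {1..n}"
    by (auto simp: not_less_eq_eq)
  then show ?thesis
    by simp
qed

lemma full_prior_nonneg: "q \<in> priors n \<Longrightarrow> j \<le> n \<Longrightarrow> 0 \<le> full_prior n q j"
  unfolding priors_def full_prior_def by auto

lemma sum_full_prior: "(\<Sum>j\<le>n. full_prior n q j) = 1"
  by (simp add: sum_atMost_split_0 full_prior_def)

lemma exists_prior_coefficients:
  "\<exists>q\<in>priors n. \<exists>\<beta> t. w = (\<lambda>i. (\<beta> i - t) * q i) \<and> w0 = - t * full_prior n q 0"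
proof -
  define N where "N = real n + 1"
  have "N > 0"
    by (simp add: N_def)
  define q :: "nat \<Rightarrow> real" where "q i = 1 / N" for i
  have "q \<in> priors n" "full_prior n q 0 = 1 / N"
    using \<open>N > 0\<close> by (auto simp: priors_def full_prior_def q_def N_def field_simps)
  moreover define t where "t = - w0 * N"
  moreover define \<beta> where "\<beta> i = w i * N + t" for i
  ultimately have "w = (\<lambda>i. (\<beta> i - t) * q i)" "w0 = - t * full_prior n q 0"
    using \<open>N > 0\<close> by (auto simp: q_def fun_eq_iff)
  then show ?thesis
    using \<open>q \<in> priors n\<close> by blast
qed

locale signal_experiment =
  fixes n :: nat and a b :: real and f :: "nat \<Rightarrow> real \<Rightarrow> real"
  assumes is_experiment: "is_experiment n a b f"
begin

lemma f_measurable: "i \<le> n \<Longrightarrow> f i \<in> borel_measurable (sig_space a b)"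
  using is_experiment unfolding is_experiment_def by blast

lemma f_nonneg: "i \<le> n \<Longrightarrow> x \<in> {a..b} \<Longrightarrow> 0 \<le> f i x"
  using is_experiment unfolding is_experiment_def by blast

lemma f_integrable: "i \<le> n \<Longrightarrow> integrable (sig_space a b) (f i)"
  using is_experiment f_measurable f_nonneg
  unfolding is_experiment_def by (intro integrableI_nonneg) (auto intro!: AE_I2)

lemma f_integral: "i \<le> n \<Longrightarrow> (\<integral>x. f i x \<partial>sig_space a b) = 1"
  using is_experiment f_measurable f_nonneg
  unfolding is_experiment_def by (subst integral_eq_nn_integral) (auto intro!: AE_I2)

lemma measurable_sum_f:
  "I \<subseteq> {..n} \<Longrightarrow> (\<lambda>x. \<Sum>i\<in>I. c i * f i x) \<in> borel_measurable (sig_space a b)"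
  using f_measurable by (intro borel_measurable_sum borel_measurable_times) auto

lemma integrable_sum_f: "I \<subseteq> {..n} \<Longrightarrow> integrable (sig_space a b) (\<lambda>x. \<Sum>i\<in>I. c i * f i x)"
  using f_integrable by (intro Bochner_Integration.integrable_sum integrable_mult_right) auto

lemma integral_sum_f:
  assumes "I \<subseteq> {..n}"
  shows "(\<integral>x. (\<Sum>i\<in>I. c i * f i x) \<partial>sig_space a b) = (\<Sum>i\<in>I. c i)"
proof -
  have "finite I"
    using assms finite_subset by blast
  then show ?thesis
    using assms f_integrable f_integral
    by (subst Bochner_Integration.integral_sum) (auto simp: subset_iff intro!: sum.cong)
qed

definition marginal :: "(nat \<Rightarrow> real) \<Rightarrow> real \<Rightarrow> real" where
  "marginal q x = (\<Sum>j\<le>n. full_prior n q j * f j x)"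

lemma measurable_marginal [measurable]: "marginal q \<in> borel_measurable (sig_space a b)"
  unfolding marginal_def by (rule measurable_sum_f) simp

lemma integrable_marginal: "integrable (sig_space a b) (marginal q)"
  unfolding marginal_def by (intro integrable_sum_f) auto

lemma marginal_split: "marginal q x = full_prior n q 0 * f 0 x + (\<Sum>i=1..n. q i * f i x)"
  unfolding marginal_def sum_atMost_split_0 by (simp add: full_prior_def)

lemma uncond_eq_density: "uncond n a b f q = density (sig_space a b) (\<lambda>x. ennreal (marginal q x))"
  unfolding uncond_def marginal_def ..

lemma posterior_eq: "posterior n f q x i = q i * f i x / marginal q x"
  unfolding posterior_def marginal_def ..

context
  fixes q assumes q: "q \<in> priors n"
begin

lemma marginal_nonneg: "x \<in> {a..b} \<Longrightarrow> 0 \<le> marginal q x"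
  unfolding marginal_def using f_nonneg full_prior_nonneg[OF q] by (auto intro: sum_nonneg)

lemma prob_space_uncond: "prob_space (uncond n a b f q)"
proof -
  have "(\<integral>\<^sup>+x. ennreal (marginal q x) \<partial>sig_space a b) = ennreal (\<integral>x. marginal q x \<partial>sig_space a b)"
    using marginal_nonneg by (intro nn_integral_eq_integral integrable_marginal AE_I2) auto
  also have "\<dots> = 1"
    unfolding marginal_def by (simp add: integral_sum_f sum_full_prior)
  finally show ?thesis
    unfolding uncond_eq_density by (intro prob_space_density_of_nn_integral) auto
qed

text \<open>Where the marginal density vanishes, the posterior is \<open>0\<close> by division by zero;
  this is harmless because then every \<open>q i * f i x\<close> vanishes as well.\<close>
lemma marginal_times_posterior:
  assumes x: "x \<in> {a..b}" and i: "i \<in> {1..n}"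
  shows "marginal q x * posterior n f q x i = q i * f i x"
proof (cases "marginal q x = 0")
  case True
  have "full_prior n q i * f i x \<le> marginal q x"
    unfolding marginal_def
    using i f_nonneg[OF _ x] full_prior_nonneg[OF q] by (intro member_le_sum) auto
  moreover have "full_prior n q i = q i" "0 \<le> q i * f i x"
    using i f_nonneg[OF _ x] full_prior_nonneg[OF q, of i] by (auto simp: full_prior_def)
  ultimately show ?thesis
    using True by (simp add: posterior_eq)
qed (simp add: posterior_eq)

lemma marginal_times_posterior_comb:
  "x \<in> {a..b} \<Longrightarrow> marginal q x * (\<Sum>i=1..n. \<beta> i * posterior n f q x i) = (\<Sum>i=1..n. (\<beta> i * q i) * f i x)"
  unfolding sum_distrib_left by (intro sum.cong refl) (simp add: marginal_times_posterior algebra_simps)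

lemma measurable_posterior_comb:
  "(\<lambda>x. \<Sum>i=1..n. \<beta> i * posterior n f q x i) \<in> borel_measurable (sig_space a b)"
  unfolding posterior_eq using f_measurable
  by (intro borel_measurable_sum borel_measurable_times borel_measurable_divide
      borel_measurable_const measurable_marginal) auto

lemma integrable_posterior_comb:
  "integrable (uncond n a b f q) (\<lambda>x. \<Sum>i=1..n. \<beta> i * posterior n f q x i)"
  unfolding uncond_eq_density
  using marginal_nonneg measurable_posterior_comb marginal_times_posterior_comb
  by (intro integrable_density_of_times[where k = "\<lambda>x. \<Sum>i=1..n. (\<beta> i * q i) * f i x"]
      integrable_sum_f) auto

lemma integral_posterior_comb:
  "(\<integral>x. (\<Sum>i=1..n. \<beta> i * posterior n f q x i) \<partial>uncond n a b f q) = (\<Sum>i=1..n. \<beta> i * q i)"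
  unfolding uncond_eq_density
  using marginal_nonneg measurable_posterior_comb marginal_times_posterior_comb
  by (subst integral_density_of_times) (auto simp: integral_sum_f)

lemma stop_loss_posterior_comb:
  "(\<integral>\<^sup>+x. ennreal ((\<Sum>i=1..n. \<beta> i * posterior n f q x i) - t) \<partial>uncond n a b f q)
     = pos_mass n a b f (\<lambda>i. (\<beta> i - t) * q i) (- t * full_prior n q 0)"
proof -
  have "(\<Sum>i=1..n. (\<beta> i * q i) * f i x) - t * marginal q x
      = (\<Sum>i=1..n. ((\<beta> i - t) * q i) * f i x) + (- t * full_prior n q 0) * f 0 x" for x
    unfolding marginal_split by (simp add: algebra_simps sum_subtractf sum_distrib_left)
  then show ?thesis
    unfolding uncond_eq_density pos_mass_def
    using marginal_nonneg measurable_posterior_comb marginal_times_posterior_comb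
    by (subst nn_integral_density_of_times_pos_part) auto
qed

end


context
  assumes f0_pos: "\<forall>x\<in>{a..b}. f 0 x > 0"
begin

lemma prob_space_state0: "prob_space (state0 a b f)"
  unfolding state0_def
  using is_experiment f_measurable by (intro prob_space_density_of_nn_integral) (auto simp: is_experiment_def)

lemma f0_times_lratio_comb:
  assumes "x \<in> {a..b}"
  shows "f 0 x * (\<Sum>i=1..n. \<beta> i * lratio f x i) = (\<Sum>i=1..n. \<beta> i * f i x)"
proof -
  have "f 0 x \<noteq> 0"
    using f0_pos assms by fastforce
  then show ?thesis
    unfolding lratio_def sum_distrib_left by (intro sum.cong refl) (simp add: field_simps)
qed

lemma measurable_lratio_comb:
  "(\<lambda>x. \<Sum>i=1..n. \<beta> i * lratio f x i) \<in> borel_measurable (sig_space a b)"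
  unfolding lratio_def using f_measurable
  by (intro borel_measurable_sum borel_measurable_times borel_measurable_divide borel_measurable_const) auto

lemma integrable_lratio_comb: "integrable (state0 a b f) (\<lambda>x. \<Sum>i=1..n. \<beta> i * lratio f x i)"
  unfolding state0_def
  using f_measurable f_nonneg measurable_lratio_comb f0_times_lratio_comb
  by (intro integrable_density_of_times[where k = "\<lambda>x. \<Sum>i=1..n. \<beta> i * f i x"] integrable_sum_f)
     auto

lemma integral_lratio_comb:
  "(\<integral>x. (\<Sum>i=1..n. \<beta> i * lratio f x i) \<partial>state0 a b f) = (\<Sum>i=1..n. \<beta> i)"
  unfolding state0_def
  using f_measurable f_nonneg measurable_lratio_comb f0_times_lratio_comb
  by (subst integral_density_of_times) (auto simp: integral_sum_f)

lemma stop_loss_lratio_comb: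
  "(\<integral>\<^sup>+x. ennreal ((\<Sum>i=1..n. \<beta> i * lratio f x i) - t) \<partial>state0 a b f) = pos_mass n a b f \<beta> (- t)"
  unfolding state0_def pos_mass_def
  using f_measurable f_nonneg measurable_lratio_comb f0_times_lratio_comb
  by (subst nn_integral_density_of_times_pos_part) auto

end

end

lemma LB_ge_iff_pos_mass_le:
  assumes "is_experiment n a b f" and "is_experiment n c d g"
  shows "LB_ge n a b f c d g \<longleftrightarrow> (\<forall>w w0. pos_mass n c d g w w0 \<le> pos_mass n a b f w w0)"
proof -
  interpret F: signal_experiment n a b f by (rule signal_experiment.intro) fact
  interpret G: signal_experiment n c d g by (rule signal_experiment.intro) fact
  have "cx_ge (uncond n a b f q) (\<lambda>x. \<Sum>i=1..n. \<beta> i * posterior n f q x i)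
      (uncond n c d g q) (\<lambda>y. \<Sum>i=1..n. \<beta> i * posterior n g q y i) \<longleftrightarrow>
    (\<forall>t. pos_mass n c d g (\<lambda>i. (\<beta> i - t) * q i) (- t * full_prior n q 0)
      \<le> pos_mass n a b f (\<lambda>i. (\<beta> i - t) * q i) (- t * full_prior n q 0))"
    if q: "q \<in> priors n" for q \<beta>
  proof -
    have "(\<integral>x. (\<Sum>i=1..n. \<beta> i * posterior n f q x i) \<partial>uncond n a b f q)
        = (\<integral>y. (\<Sum>i=1..n. \<beta> i * posterior n g q y i) \<partial>uncond n c d g q)"
      by (simp only: F.integral_posterior_comb[OF q] G.integral_posterior_comb[OF q])
    then show ?thesis
      by (subst cx_ge_iff_stop_loss_le[OF F.prob_space_uncond[OF q] G.prob_space_uncond[OF q]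
            F.integrable_posterior_comb[OF q] G.integrable_posterior_comb[OF q]])
         (simp_all only: F.stop_loss_posterior_comb[OF q] G.stop_loss_posterior_comb[OF q])
  qed
  then have "LB_ge n a b f c d g \<longleftrightarrow> (\<forall>q\<in>priors n. \<forall>\<beta> t.
      pos_mass n c d g (\<lambda>i. (\<beta> i - t) * q i) (- t * full_prior n q 0)
      \<le> pos_mass n a b f (\<lambda>i. (\<beta> i - t) * q i) (- t * full_prior n q 0))" (is "_ \<longleftrightarrow> ?P")
    unfolding LB_ge_def lcx_ge_def by simp
  also have "\<dots> \<longleftrightarrow> (\<forall>w w0. pos_mass n c d g w w0 \<le> pos_mass n a b f w w0)"
  proof
    assume all_priors: ?P
    show "\<forall>w w0. pos_mass n c d g w w0 \<le> pos_mass n a b f w w0"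
    proof (intro allI)
      fix w w0
      obtain q \<beta> t where "q \<in> priors n" "w = (\<lambda>i. (\<beta> i - t) * q i)" "w0 = - t * full_prior n q 0"
        using exists_prior_coefficients by blast
      then show "pos_mass n c d g w w0 \<le> pos_mass n a b f w w0"
        using all_priors by blast
    qed
  qed blast
  finally show ?thesis .
qed

lemma lcx_ge_lratio_iff_pos_mass_le:
  assumes "is_experiment n a b f" and "is_experiment n c d g"
    and "\<forall>x\<in>{a..b}. f 0 x > 0" and "\<forall>y\<in>{c..d}. g 0 y > 0"
  shows "lcx_ge n (state0 a b f) (lratio f) (state0 c d g) (lratio g) \<longleftrightarrow>
    (\<forall>w w0. pos_mass n c d g w w0 \<le> pos_mass n a b f w w0)"
proof -
  interpret F: signal_experiment n a b f by (rule signal_experiment.intro) fact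
  interpret G: signal_experiment n c d g by (rule signal_experiment.intro) fact
  note F_pos = assms(3) and G_pos = assms(4)
  have "cx_ge (state0 a b f) (\<lambda>x. \<Sum>i=1..n. w i * lratio f x i)
      (state0 c d g) (\<lambda>y. \<Sum>i=1..n. w i * lratio g y i) \<longleftrightarrow>
    (\<forall>t. pos_mass n c d g w (- t) \<le> pos_mass n a b f w (- t))" for w
  proof -
    have "(\<integral>x. (\<Sum>i=1..n. w i * lratio f x i) \<partial>state0 a b f)
        = (\<integral>y. (\<Sum>i=1..n. w i * lratio g y i) \<partial>state0 c d g)"
      by (simp only: F.integral_lratio_comb[OF F_pos] G.integral_lratio_comb[OF G_pos])
    then show ?thesis
      by (subst cx_ge_iff_stop_loss_le[OF F.prob_space_state0[OF F_pos] G.prob_space_state0[OF G_pos]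
            F.integrable_lratio_comb[OF F_pos] G.integrable_lratio_comb[OF G_pos]])
         (simp_all only: F.stop_loss_lratio_comb[OF F_pos] G.stop_loss_lratio_comb[OF G_pos])
  qed
  then have "lcx_ge n (state0 a b f) (lratio f) (state0 c d g) (lratio g) \<longleftrightarrow>
      (\<forall>w t. pos_mass n c d g w (- t) \<le> pos_mass n a b f w (- t))"
    unfolding lcx_ge_def by simp
  also have "\<dots> \<longleftrightarrow> (\<forall>w w0. pos_mass n c d g w w0 \<le> pos_mass n a b f w w0)"
    by (metis minus_minus)
  finally show ?thesis .
qed

theorem proposition1:
  fixes n :: nat and a b c d :: real and f g :: "nat \<Rightarrow> real \<Rightarrow> real"
  assumes "is_experiment n a b f" and "is_experiment n c d g"
    and "\<forall>x\<in>{a..b}. f 0 x > 0" and "\<forall>y\<in>{c..d}. g 0 y > 0"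
  shows "LB_ge n a b f c d g \<longleftrightarrow> lcx_ge n (state0 a b f) (lratio f) (state0 c d g) (lratio g)"
  using LB_ge_iff_pos_mass_le[OF assms(1,2)] lcx_ge_lratio_iff_pos_mass_le[OF assms] by simp
end
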